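(* Consider the scaled induction machine model with state $x=(\tilde i_{s\alpha},\tilde i_{s\beta},\tilde\psi_{r\alpha},\tilde\psi_{r\beta},\omega_e,T_r)^T$, input $\mathcal{V}_s\in\mathbb{R}^2$ (differentiable in time): $$\dot{\tilde{\mathcal{I}}}_s=\mathcal{V}_s+a\tilde{\mathcal{I}}_s+\gamma\tilde\Psi_r,\quad \dot{\tilde\Psi}_r=-\gamma\tilde\Psi_r-(a-b)\tilde{\mathcal{I}}_s,\quad \dot\omega_e=\tfrac{c}{J}\tilde{\mathcal{I}}_s^T\mathbf{J}_2\tilde\Psi_r-\tfrac{p}{J}T_r,\quad \dot T_r=0,$$ with $\gamma=\frac{1}{\tau_r}\mathbf{I}_2-\omega_e\mathbf{J}_2$, $\mathbf{J}_2=\begin{bmatrix}0&-1\\1&0\end{bmatrix}$, and output $y=\tilde{\mathcal{I}}_s$. Let $\mathcal{O}(x)$ be the $6\times6$ matrix whose rows are the gradients with respect to $x$ (columns in the order above) of $\tilde i_{s\alpha},\tilde i_{s\beta},\mathcal{L}_f\tilde i_{s\alpha},\mathcal{L}_f\tilde i_{s\beta},\mathcal{L}_f^2\tilde i_{s\alpha},\mathcal{L}_f^2\tilde i_{s\beta}$. Writing $\Psi_r=(\psi_{r\alpha},\psi_{r\beta})^T=\tilde\Psi_r/k_r$, one has $$\det\mathcal{O}(x)=\frac{p}{J}\frac{k_r^2}{\tau_r^2}\Big[\tau_r\dot\omega_e\big(\psi_{r\alpha}^2+\psi_{r\beta}^2\big)-\big(1+\tau_r^2\omega_e^2\big)\Big(\dot\psi_{r\alpha}\psi_{r\beta}-\dot\psi_{r\beta}\psi_{r\alpha}\Big)\Big],$$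 where $\dot\omega_e,\dot\psi_{r\alpha},\dot\psi_{r\beta}$ denote the right-hand sides of the model (functions of the state).
   Context: $a=-R_\sigma/L_\sigma$, $b=-R_s/L_\sigma$, $c=p^2/L_\sigma$, $k_r=M/L_r$, $\tau_r=L_r/R_r$, $L_\sigma=\sigma L_s$, $\sigma=1-M^2/(L_sL_r)$, $R_\sigma=R_s+k_r^2R_r$; $\tilde{\mathcal{I}}_s=L_\sigma\mathcal{I}_s$, $\tilde\Psi_r=k_r\Psi_r$; $p,J,\tau_r,k_r>0$. Lie derivatives: $\mathcal{L}_f^0h=h$, $\mathcal{L}_f^{k+1}h$ is the time derivative of $\mathcal{L}_f^kh$ along the model (terms involving $\dot{\mathcal{V}}_s$ do not depend on $x$). *)

theory Defs
  imports "HOL-Analysis.Analysis"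
begin

definition sigma_im :: "real \<Rightarrow> real \<Rightarrow> real \<Rightarrow> real" where
  "sigma_im Ls Lr M = 1 - M^2 / (Ls * Lr)"
definition Lsig :: "real \<Rightarrow> real \<Rightarrow> real \<Rightarrow> real" where
  "Lsig Ls Lr M = sigma_im Ls Lr M * Ls"
definition k_r :: "real \<Rightarrow> real \<Rightarrow> real" where
  "k_r Lr M = M / Lr"
definition tau_r :: "real \<Rightarrow> real \<Rightarrow> real" where
  "tau_r Rr Lr = Lr / Rr"
definition Rsig :: "real \<Rightarrow> real \<Rightarrow> real \<Rightarrow> real \<Rightarrow> real" where
  "Rsig Rs Rr Lr M = Rs + (k_r Lr M)^2 * Rr"
definition a_im :: "real \<Rightarrow> real \<Rightarrow> real \<Rightarrow> real \<Rightarrow> real \<Rightarrow> real" where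
  "a_im Rs Rr Ls Lr M = - Rsig Rs Rr Lr M / Lsig Ls Lr M"
definition b_im :: "real \<Rightarrow> real \<Rightarrow> real \<Rightarrow> real \<Rightarrow> real" where
  "b_im Rs Ls Lr M = - Rs / Lsig Ls Lr M"
definition c_im :: "real \<Rightarrow> real \<Rightarrow> real \<Rightarrow> real \<Rightarrow> real" where
  "c_im p Ls Lr M = p^2 / Lsig Ls Lr M"

text \<open>State x = (i_sa, i_sb, psi_ra, psi_rb, omega_e, T_r) stored as x$1,...,x$6
  (note that in the index type 6 the numeral 6 is the element 0).
  V is the input voltage vector (V$1, V$2).\<close>

definition im_field ::
  "real \<Rightarrow> real \<Rightarrow> real \<Rightarrow> real \<Rightarrow> real \<Rightarrow> real \<Rightarrow> real \<Rightarrow> real^6 \<Rightarrow> real^2 \<Rightarrow> real^6" where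
  "im_field Rs Rr Ls Lr M p J x V =
    (let a = a_im Rs Rr Ls Lr M; b = b_im Rs Ls Lr M; c = c_im p Ls Lr M;
         tr = tau_r Rr Lr;
         i1 = x$1; i2 = x$2; f1 = x$3; f2 = x$4; w = x$5; T = x$6
     in (\<chi> k. if k = 1 then V$1 + a * i1 + (1/tr) * f1 + w * f2
         else if k = 2 then V$2 + a * i2 + (1/tr) * f2 - w * f1
         else if k = 3 then - ((1/tr) * f1 + w * f2) - (a - b) * i1
         else if k = 4 then - ((1/tr) * f2 - w * f1) - (a - b) * i2
         else if k = 5 then (c / J) * (i1 * (- f2) + i2 * f1) - (p / J) * T
         else 0))"

text \<open>Functions h x u of the state x and of the jet u of the input
  (u 0 = V_s, u 1 = dV_s/dt, ...).\<close>

definition partial_x :: "(real^6 \<Rightarrow> (nat \<Rightarrow> real^2) \<Rightarrow> real) \<Rightarrow> 6 \<Rightarrow> real^6 \<Rightarrow> (nat \<Rightarrow> real^2) \<Rightarrow> real" where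
  "partial_x h j x u = deriv (\<lambda>t. h (x + t *\<^sub>R axis j 1) u) 0"

definition partial_u :: "(real^6 \<Rightarrow> (nat \<Rightarrow> real^2) \<Rightarrow> real) \<Rightarrow> nat \<Rightarrow> 2 \<Rightarrow> real^6 \<Rightarrow> (nat \<Rightarrow> real^2) \<Rightarrow> real" where
  "partial_u h k i x u = deriv (\<lambda>t. h x (u(k := u k + t *\<^sub>R axis i 1))) 0"

text \<open>Time derivative along the model of a function depending on x and on u 0, ..., u (m-1).\<close>
definition lie_step ::
  "(real^6 \<Rightarrow> real^2 \<Rightarrow> real^6) \<Rightarrow> nat \<Rightarrow> (real^6 \<Rightarrow> (nat \<Rightarrow> real^2) \<Rightarrow> real) \<Rightarrow> real^6 \<Rightarrow> (nat \<Rightarrow> real^2) \<Rightarrow> real" where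
  "lie_step F m h x u =
     (\<Sum>j\<in>UNIV. partial_x h j x u * F x (u 0) $ j)
   + (\<Sum>k<m. \<Sum>i\<in>UNIV. partial_u h k i x u * u (Suc k) $ i)"

fun lie_iter ::
  "(real^6 \<Rightarrow> real^2 \<Rightarrow> real^6) \<Rightarrow> nat \<Rightarrow> (real^6 \<Rightarrow> (nat \<Rightarrow> real^2) \<Rightarrow> real) \<Rightarrow> real^6 \<Rightarrow> (nat \<Rightarrow> real^2) \<Rightarrow> real" where
  "lie_iter F 0 h = h"
| "lie_iter F (Suc n) h = lie_step F n (lie_iter F n h)"

definition out_im :: "6 \<Rightarrow> real^6 \<Rightarrow> (nat \<Rightarrow> real^2) \<Rightarrow> real" where
  "out_im i x u = x $ i"

definition obs_matrix ::
  "(real^6 \<Rightarrow> real^2 \<Rightarrow> real^6) \<Rightarrow> real^6 \<Rightarrow> (nat \<Rightarrow> real^2) \<Rightarrow> real^6^6" where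
  "obs_matrix F x u =
    (\<chi> r col.
       let (k, i) = (if r = 1 then (0::nat, 1::6) else if r = 2 then (0, 2)
                     else if r = 3 then (1, 1) else if r = 4 then (1, 2)
                     else if r = 5 then (2, 1) else (2, 2))
       in partial_x (lie_iter F k (out_im i)) col x u)"

end

theory Submission
  imports Defs
begin

text \<open>The output is the scaled stator current, so the first two rows of the observability matrix
  are unit vectors and the next two are rows of the Jacobian of the current equation, which does not
  involve the load torque \<open>T\<^sub>r\<close>. The torque enters only through \<open>\<omega>\<^sub>e\<close>, hence in the second Lie
  derivative solely via the term \<open>-p/J T\<^sub>r\<close> of \<open>\<omega>'\<^sub>e\<close> multiplied by the flux components.
  Expanding the determinant along the unit rows and then the \<open>T\<^sub>r\<close> column leaves two \<open>3\<times>3\<close>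
  minors in \<open>(\<psi>\<^sub>r, \<omega>\<^sub>e)\<close>, and since the field is quadratic in the state these are explicit
  polynomials which combine to the stated expression.\<close>

lemma UNIV_6: "(UNIV :: 6 set) = {1, 2, 3, 4, 5, 6}"
proof -
  have "x \<in> {1, 2, 3, 4, 5, 6}" for x :: 6
  proof (induct x)
    case (of_int z)
    then have "z \<in> {0, 1, 2, 3, 4, 5}" by fastforce
    then show ?case by auto
  qed
  then show ?thesis by blast
qed

lemma partial_x_eq_derivative:
  assumes "((\<lambda>y. h y u) has_derivative D) (at x)"
  shows "partial_x h j x u = D (axis j 1)"
proof -
  have line: "((\<lambda>t. x + t *\<^sub>R axis j 1) has_derivative (\<lambda>t. t *\<^sub>R axis j 1)) (at 0)"
    by (auto intro!: derivative_eq_intros)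
  have "((\<lambda>t. h (x + t *\<^sub>R axis j 1) u) has_derivative (\<lambda>t. D (t *\<^sub>R axis j 1))) (at 0)"
    using has_derivative_compose[OF line] assms by simp
  moreover have "D (t *\<^sub>R axis j 1) = D (axis j 1) * t" for t
    using linear_scale[OF has_derivative_linear[OF assms]] by simp
  ultimately show ?thesis
    unfolding partial_x_def by (intro DERIV_imp_deriv) (simp add: has_field_derivative_def)
qed

lemma sum_partial_x_eq_derivative:
  assumes "((\<lambda>y. h y u) has_derivative D) (at x)"
  shows "(\<Sum>j\<in>UNIV. partial_x h j x u * v $ j) = D v"
proof -
  have "D v = D (\<Sum>j\<in>UNIV. v $ j *\<^sub>R axis j 1)"
    using basis_expansion[of v] by (simp add: scalar_mult_eq_scaleR)
  also have "\<dots> = (\<Sum>j\<in>UNIV. v $ j * D (axis j 1))"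
    using has_derivative_linear[OF assms] by (simp add: linear_sum linear_scale)
  finally show ?thesis
    by (simp add: partial_x_eq_derivative[where h = h and u = u, OF assms] mult.commute)
qed

lemma partial_u_eqI:
  assumes "((\<lambda>t. h x (u(k := u k + t *\<^sub>R axis i 1))) has_real_derivative D) (at 0)"
  shows "partial_u h k i x u = D"
  unfolding partial_u_def using assms by (rule DERIV_imp_deriv)

lemma has_derivative_vec_nth [derivative_intros]: "((\<lambda>x. x $ i) has_derivative (\<lambda>e. e $ i)) F"
  by (rule bounded_linear_imp_has_derivative) (rule bounded_linear_vec_nth)

lemma has_derivative_out_im: "((\<lambda>y. out_im i y u) has_derivative (\<lambda>e. e $ i)) (at x)"
  unfolding out_im_def by (rule has_derivative_vec_nth)

lemma partial_x_out_im: "partial_x (out_im i) j x u = axis j 1 $ i"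
  by (rule partial_x_eq_derivative[OF has_derivative_out_im])

lemma lie_iter_1_out_im: "lie_iter F 1 (out_im i) = (\<lambda>x u. F x (u 0) $ i)"
  by (intro ext) (simp add: lie_step_def sum_partial_x_eq_derivative[OF has_derivative_out_im])

lemma lie_iter_2_out_im:
  assumes input: "\<And>y V. F y V $ i = V $ l + F y 0 $ i"
    and deriv: "\<And>x V. ((\<lambda>y. F y V $ i) has_derivative DF x) (at x)"
  shows "lie_iter F 2 (out_im i) x u = DF x (F x (u 0)) + u 1 $ l"
proof -
  have "partial_u (\<lambda>x u. F x (u 0) $ i) 0 m x u = axis m 1 $ l" for m
    by (rule partial_u_eqI, subst input) (auto intro!: derivative_eq_intros)
  then have "(\<Sum>m\<in>UNIV. partial_u (\<lambda>x u. F x (u 0) $ i) 0 m x u * u 1 $ m) = u 1 $ l"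
    by (simp add: axis_def if_distrib[of "\<lambda>z. z * _"] cong: if_cong)
  moreover have "lie_iter F 2 (out_im i) = lie_step F 1 (\<lambda>x u. F x (u 0) $ i)"
    using lie_iter_1_out_im[of F i] by (simp add: numeral_2_eq_2)
  ultimately show ?thesis
    by (simp add: lie_step_def sum_partial_x_eq_derivative[where h = "\<lambda>x u. F x (u 0) $ i", OF deriv])
qed

text \<open>Laplace expansion along the two unit rows and then along the last column.\<close>

lemma det_6_unit_rows:
  fixes A :: "real^6^6"
  assumes "\<And>j. A$1$j = (if j = 1 then 1 else 0)" "\<And>j. A$2$j = (if j = 2 then 1 else 0)"
    and "A$3$6 = 0" "A$4$6 = 0"
  shows "det A = - A$5$6 * (A$3$3*A$4$4*A$6$5 + A$3$4*A$4$5*A$6$3 + A$3$5*A$4$3*A$6$4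
                            - A$3$3*A$4$5*A$6$4 - A$3$4*A$4$3*A$6$5 - A$3$5*A$4$4*A$6$3)
                 + A$6$6 * (A$3$3*A$4$4*A$5$5 + A$3$4*A$4$5*A$5$3 + A$3$5*A$4$3*A$5$4
                            - A$3$3*A$4$5*A$5$4 - A$3$4*A$4$3*A$5$5 - A$3$5*A$4$4*A$5$3)"
proof -
  have ins1: "finite {2::6,3,4,5,6}" "1 \<notin> {2::6,3,4,5,6}" by auto
  have ins2: "finite {3::6,4,5,6}" "2 \<notin> {3::6,4,5,6}" by auto
  have ins3: "finite {4::6,5,6}" "3 \<notin> {4::6,5,6}" by auto
  have ins4: "finite {5::6,6}" "4 \<notin> {5::6,6}" by auto
  have ins5: "finite {6::6}" "5 \<notin> {6::6}" by auto
  show ?thesis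
    unfolding det_def UNIV_6
    unfolding sum_over_permutations_insert[OF ins1]
    unfolding sum_over_permutations_insert[OF ins2]
    unfolding sum_over_permutations_insert[OF ins3]
    unfolding sum_over_permutations_insert[OF ins4]
    unfolding sum_over_permutations_insert[OF ins5]
    unfolding permutes_sing
    by (simp add: assms sign_swap_id permutation_swap_id sign_compose permutation_compose sign_id swap_id_eq algebra_simps)
qed

locale induction_machine =
  fixes Rs Rr Ls Lr M p J :: real
begin

abbreviation "f \<equiv> im_field Rs Rr Ls Lr M p J"
abbreviation "a \<equiv> a_im Rs Rr Ls Lr M"
abbreviation "b \<equiv> b_im Rs Ls Lr M"
abbreviation "c \<equiv> c_im p Ls Lr M"
abbreviation "tr \<equiv> tau_r Rr Lr"

lemma im_field_nth:
  "f x V $ 1 = V $ 1 + a * x$1 + x$3 / tr + x$5 * x$4"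
  "f x V $ 2 = V $ 2 + a * x$2 + x$4 / tr - x$5 * x$3"
  "f x V $ 3 = - (x$3 / tr + x$5 * x$4) - (a - b) * x$1"
  "f x V $ 4 = - (x$4 / tr - x$5 * x$3) - (a - b) * x$2"
  "f x V $ 5 = (c / J) * (x$2 * x$3 - x$1 * x$4) - (p / J) * x$6"
  "f x V $ 6 = 0"
  by (simp_all add: im_field_def Let_def)

text \<open>The field is quadratic in the state: its derivative at \<open>x\<close> is \<open>im_jacobian x\<close>, which is
  affine in \<open>x\<close> with the constant symmetric bilinear part \<open>im_hessian\<close>.\<close>

definition im_jacobian :: "real^6 \<Rightarrow> real^6 \<Rightarrow> real^6" where
  "im_jacobian x e =
    (\<chi> k. if k = 1 then a * e$1 + e$3 / tr + e$5 * x$4 + x$5 * e$4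
        else if k = 2 then a * e$2 + e$4 / tr - e$5 * x$3 - x$5 * e$3
        else if k = 3 then - (e$3 / tr + e$5 * x$4 + x$5 * e$4) - (a - b) * e$1
        else if k = 4 then - (e$4 / tr - e$5 * x$3 - x$5 * e$3) - (a - b) * e$2
        else if k = 5 then (c / J) * (e$2 * x$3 + x$2 * e$3 - e$1 * x$4 - x$1 * e$4) - (p / J) * e$6
        else 0)"

definition im_hessian :: "real^6 \<Rightarrow> real^6 \<Rightarrow> real^6" where
  "im_hessian d e =
    (\<chi> k. if k = 1 then d$5 * e$4 + e$5 * d$4
        else if k = 2 then - (d$5 * e$3 + e$5 * d$3)
        else if k = 3 then - (d$5 * e$4 + e$5 * d$4)
        else if k = 4 then d$5 * e$3 + e$5 * d$3
        else if k = 5 then (c / J) * (d$2 * e$3 + e$2 * d$3 - d$1 * e$4 - e$1 * d$4)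
        else 0)"

lemma has_derivative_im_field:
  "((\<lambda>y. f y V $ k) has_derivative (\<lambda>e. im_jacobian x e $ k)) (at x)"
proof -
  have "k \<in> {1, 2, 3, 4, 5, 6}" by (simp add: UNIV_6[symmetric])
  then show ?thesis
    unfolding im_jacobian_def
    by (elim insertE emptyE; simp only: vec_lambda_beta; simp add: im_field_nth divide_inverse;
        auto intro!: derivative_eq_intros)
qed

lemma has_derivative_im_jacobian_field:
  "((\<lambda>y. im_jacobian y (f y V) $ k) has_derivative
     (\<lambda>d. im_jacobian x (im_jacobian x d) $ k + im_hessian d (f x V) $ k)) (at x)"
proof -
  have "k \<in> {1, 2, 3, 4, 5, 6}" by (simp add: UNIV_6[symmetric])
  then show ?thesis
    unfolding im_jacobian_def im_hessian_def
    by (elim insertE emptyE; simp only: vec_lambda_beta; simp add: im_field_nth divide_inverse;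
        auto intro!: derivative_eq_intros simp: algebra_simps)
qed

lemma lie_iter_2_out_im_field:
  "lie_iter f 2 (out_im 1) x u = im_jacobian x (f x (u 0)) $ 1 + u 1 $ 1"
  "lie_iter f 2 (out_im 2) x u = im_jacobian x (f x (u 0)) $ 2 + u 1 $ 2"
  by (rule lie_iter_2_out_im[OF _ has_derivative_im_field], simp add: im_field_nth)+

lemma obs_matrix_im_field_nth:
  "obs_matrix f x u $ 1 $ j = axis j 1 $ 1"
  "obs_matrix f x u $ 2 $ j = axis j 1 $ 2"
  "obs_matrix f x u $ 3 $ j = im_jacobian x (axis j 1) $ 1"
  "obs_matrix f x u $ 4 $ j = im_jacobian x (axis j 1) $ 2"
  "obs_matrix f x u $ 5 $ j =
     im_jacobian x (im_jacobian x (axis j 1)) $ 1 + im_hessian (axis j 1) (f x (u 0)) $ 1"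
  "obs_matrix f x u $ 6 $ j =
     im_jacobian x (im_jacobian x (axis j 1)) $ 2 + im_hessian (axis j 1) (f x (u 0)) $ 2"
proof -
  have second: "partial_x (lie_iter f 2 (out_im i)) j x u =
      im_jacobian x (im_jacobian x (axis j 1)) $ i + im_hessian (axis j 1) (f x (u 0)) $ i"
    if "i = 1 \<or> i = 2" for i
  proof (rule partial_x_eq_derivative)
    show "((\<lambda>y. lie_iter f 2 (out_im i) y u) has_derivative
        (\<lambda>d. im_jacobian x (im_jacobian x d) $ i + im_hessian d (f x (u 0)) $ i)) (at x)"
      using that by (auto simp: lie_iter_2_out_im_field
          intro!: derivative_eq_intros has_derivative_im_jacobian_field)
  qed
  show "obs_matrix f x u $ 1 $ j = axis j 1 $ 1" "obs_matrix f x u $ 2 $ j = axis j 1 $ 2"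
    by (simp_all add: obs_matrix_def partial_x_out_im)
  show "obs_matrix f x u $ 3 $ j = im_jacobian x (axis j 1) $ 1"
    "obs_matrix f x u $ 4 $ j = im_jacobian x (axis j 1) $ 2"
    by (simp_all add: obs_matrix_def lie_iter_1_out_im[simplified]
        partial_x_eq_derivative[OF has_derivative_im_field])
  show "obs_matrix f x u $ 5 $ j =
      im_jacobian x (im_jacobian x (axis j 1)) $ 1 + im_hessian (axis j 1) (f x (u 0)) $ 1"
    "obs_matrix f x u $ 6 $ j =
      im_jacobian x (im_jacobian x (axis j 1)) $ 2 + im_hessian (axis j 1) (f x (u 0)) $ 2"
    by (simp_all add: obs_matrix_def second)
qed

text \<open>The determinant in terms of the scaled flux \<open>(x$3, x$4) = k\<^sub>r \<Psi>\<^sub>r\<close>; the theorem is its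
  rescaling.\<close>

lemma det_obs_matrix_im_field:
  "det (obs_matrix f x u) =
     (p / J) * ((1 / tr) * f x (u 0) $ 5 * (x$3^2 + x$4^2)
       - ((1 / tr)^2 + x$5^2) * (f x (u 0) $ 3 * x$4 - f x (u 0) $ 4 * x$3))"
  by (subst det_6_unit_rows;
      simp add: obs_matrix_im_field_nth axis_def im_jacobian_def im_hessian_def im_field_nth)
     (simp add: divide_inverse algebra_simps power2_eq_square)

end

theorem mainTheorem7:
  fixes Rs Rr Ls Lr M p J :: real
    and x :: "real^6" and u :: "nat \<Rightarrow> real^2"
  assumes "p > 0" and "J > 0" and "tau_r Rr Lr > 0" and "k_r Lr M > 0"
  shows "det (obs_matrix (im_field Rs Rr Ls Lr M p J) x u) =
    (let tr = tau_r Rr Lr; kr = k_r Lr M;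
         d = im_field Rs Rr Ls Lr M p J x (u 0);
         psa = x$3 / kr; psb = x$4 / kr; w = x$5;
         dpsa = d$3 / kr; dpsb = d$4 / kr; dw = d$5
     in (p / J) * (kr^2 / tr^2) *
        (tr * dw * (psa^2 + psb^2) - (1 + tr^2 * w^2) * (dpsa * psb - dpsb * psa)))"
proof -
  from assms have "J \<noteq> 0" "tau_r Rr Lr \<noteq> 0" "k_r Lr M \<noteq> 0" by auto
  then show ?thesis
    by (simp add: induction_machine.det_obs_matrix_im_field Let_def field_simps power2_eq_square)
qed

end
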